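(* Let $G=(\mathcal V,\mathcal E)$ be an acyclic ADT network over $\mathbb F_q$ with a single source supernode $S$ and destination supernodes $T_1,\dots,T_N$, and let $A$, $F$, $B$ be its encoding, adjacency and decoding matrices. Then $I-F$ is invertible, and the system matrix $M$, i.e. the matrix satisfying $\mathcal Z=\mathcal X(S)\,M$ for every value of the source processes, is $$M=A\,(I-F)^{-1}\,B^T .$$
   Context: ADT network model. $G=(\mathcal V,\mathcal E)$ is a directed acyclic network whose nodes ("supernodes") $V\in\mathcal V$ each consist of a finite set of input ports $I(V)$ and output ports $O(V)$, all ports being distinct. Each edge $(e,e')\in\mathcal E$ goes from an output port of one supernode to an input port of another supernode. Fix a finite field $\mathbb F_q$; each edge carries one symbol of $\mathbb F_q$. The source $S$ has source processes $\mathcal X(S)=[X(S,1),\dots,X(S,\mu(S))]$ with $\mu(S)\le |O(S)|$. Linear coding rules: - Each output port $e\in O(V)$ carries $Y(e)=\sum_{e'\in I(V)}\beta_{(e',e)}Y(e')$. If $V=S$, the term $\sum_{i}\alpha_{(i,e)}X(S,i)$ is added. - An output port sends the same symbol on all of its outgoing edges (broadcast). - An input port $e'$ receives the $\mathbb F_q$-sum of the symbols on all edges entering it: $Y(e')=\sum_{(e,e')\in\mathcal E}Y(e)$ (additive MAC). - Destination $T$ outputs $Z(T,k)=\sum_{e'\in I(T)}\epsilon_{(e',(T,k))}Y(e')$ for $k=1,\dots,\nu(T)$. The coefficients $\alpha,\beta,\epsilon\in\mathbb F_q$ are free. Write $\mathcal Z=[\mathcal Z(T_1),\dots,\mathcal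 Z(T_N)]$ for the row vector of all destination outputs. Matrices. Index all ports as $e_1,\dots,e_m$. The adjacency matrix $F$ is the $m\times m$ matrix with entries $$F_{i,j}=\begin{cases}1 & \text{if } (e_i,e_j)\in\mathcal E,\\ \beta_{(e_i,e_j)} & \text{if } e_i\in I(V),\ e_j\in O(V) \text{ for some supernode } V,\\ 0 & \text{otherwise.}\end{cases}$$ The encoding matrix $A$ is the $\mu(S)\times m$ matrix with $A_{i,j}=\alpha_{(i,e_j)}$ if $e_j\in O(S)$, and $0$ otherwise. The decoding matrix $B$ is $|\mathcal Z|\times m$. Its rows are indexed by the pairs $(T_j,k)$, and its entry in row $(T_j,k)$, column $e_i$ is $\epsilon_{(e_i,(T_j,k))}$ if $e_i\in I(T_j)$, and $0$ otherwise. *)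

theory Defs
  imports "HOL-Analysis.Analysis"
begin

text \<open>Supernodes have type 'v, ports have the finite type 'p
 (the type 'p is exactly the set of all ports e_1..e_m, so m = CARD('p)).
 inp V, outp V are the input/output ports of supernode V; E is the edge set.
 Coefficients: beta e' e (input e' to output e of the same supernode),
 alpha i e (source process i to output e of S), eps e z (input port e to
 destination output z). Destination outputs are indexed by the finite type 'z;
 dest z is the destination supernode T_j to which output z = (T_j,k) belongs.\<close>

definition supernode_rel :: "('v \<Rightarrow> 'p set) \<Rightarrow> ('v \<Rightarrow> 'p set) \<Rightarrow> ('p \<times> 'p) set \<Rightarrow> ('v \<times> 'v) set" where
  "supernode_rel inp outp E =
     {(V, W). \<exists>e e'. (e, e') \<in> E \<and> e \<in> outp V \<and> e' \<in> inp W}"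

definition adt_network :: "('v \<Rightarrow> 'p set) \<Rightarrow> ('v \<Rightarrow> 'p set) \<Rightarrow> ('p \<times> 'p) set \<Rightarrow> bool" where
  "adt_network inp outp E \<longleftrightarrow>
     (\<forall>V. inp V \<inter> outp V = {}) \<and>
     (\<forall>V W. V \<noteq> W \<longrightarrow> (inp V \<union> outp V) \<inter> (inp W \<union> outp W) = {}) \<and>
     (\<forall>e::'p. \<exists>V. e \<in> inp V \<union> outp V) \<and>
     (\<forall>e e'. (e, e') \<in> E \<longrightarrow> (\<exists>V W. V \<noteq> W \<and> e \<in> outp V \<and> e' \<in> inp W)) \<and>
     acyclic (supernode_rel inp outp E)"

definition adj_matrix :: "('v \<Rightarrow> 'p set) \<Rightarrow> ('v \<Rightarrow> 'p set) \<Rightarrow> ('p \<times> 'p) set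
    \<Rightarrow> ('p \<Rightarrow> 'p \<Rightarrow> 'a::field) \<Rightarrow> 'a ^ 'p ^ 'p" where
  "adj_matrix inp outp E beta =
     (\<chi> i j. if (i, j) \<in> E then 1
            else if (\<exists>V. i \<in> inp V \<and> j \<in> outp V) then beta i j else 0)"

definition enc_matrix :: "('v \<Rightarrow> 'p set) \<Rightarrow> 'v \<Rightarrow> ('i \<Rightarrow> 'p \<Rightarrow> 'a::field) \<Rightarrow> 'a ^ 'p ^ 'i" where
  "enc_matrix outp S alpha = (\<chi> i j. if j \<in> outp S then alpha i j else 0)"

definition dec_matrix :: "('v \<Rightarrow> 'p set) \<Rightarrow> ('z \<Rightarrow> 'v) \<Rightarrow> ('p \<Rightarrow> 'z \<Rightarrow> 'a::field) \<Rightarrow> 'a ^ 'p ^ 'z" where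
  "dec_matrix inp dest eps = (\<chi> z e. if e \<in> inp (dest z) then eps e z else 0)"

definition coding_rules :: "('v \<Rightarrow> 'p set) \<Rightarrow> ('v \<Rightarrow> 'p set) \<Rightarrow> ('p \<times> 'p) set \<Rightarrow> 'v
    \<Rightarrow> ('p \<Rightarrow> 'p \<Rightarrow> 'a::field) \<Rightarrow> ('i::finite \<Rightarrow> 'p \<Rightarrow> 'a) \<Rightarrow> 'a ^ 'i \<Rightarrow> ('p \<Rightarrow> 'a) \<Rightarrow> bool" where
  "coding_rules inp outp E S beta alpha X Y \<longleftrightarrow>
     (\<forall>V e. e \<in> outp V \<longrightarrow>
        Y e = (\<Sum>e'\<in>inp V. beta e' e * Y e')
              + (if V = S then (\<Sum>i\<in>UNIV. alpha i e * X $ i) else 0)) \<and>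
     (\<forall>V e'. e' \<in> inp V \<longrightarrow> Y e' = (\<Sum>e\<in>{e. (e, e') \<in> E}. Y e))"

definition dest_outputs :: "('v \<Rightarrow> 'p set) \<Rightarrow> ('z \<Rightarrow> 'v) \<Rightarrow> ('p \<Rightarrow> 'z \<Rightarrow> 'a::field)
    \<Rightarrow> ('p \<Rightarrow> 'a) \<Rightarrow> 'a ^ 'z" where
  "dest_outputs inp dest eps Y = (\<chi> z. \<Sum>e'\<in>inp (dest z). eps e' z * Y e')"

end

theory Submission
  imports Defs
begin

text \<open>Order the ports along a topological order of the acyclic supernode graph. The symbol on
  an input port depends only on output ports of earlier supernodes, and the symbol on an output
  port only on input ports of its own supernode, so \<open>F\<close> is nilpotent in this order; concretely,
  well-founded induction over the supernodes shows that \<open>x F = x\<close> forces \<open>x = 0\<close>, hence \<open>I - F\<close>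
  is invertible. The coding rules say precisely \<open>Y (I - F) = X A\<close> for the row vector \<open>Y\<close> of port
  symbols, and the destination outputs are \<open>Y B\<^sup>T\<close>; solving for \<open>Y\<close> gives \<open>Z = X A (I - F)\<^sup>-\<^sup>1 B\<^sup>T\<close>.\<close>

lemma adt_network_port_owner:
  assumes "adt_network inp outp E"
  obtains V where "e \<in> inp V \<union> outp V"
  using assms unfolding adt_network_def by blast

lemma adt_network_port_owner_unique:
  assumes "adt_network inp outp E" "e \<in> inp V \<union> outp V" "e \<in> inp W \<union> outp W"
  shows "V = W"
  using assms unfolding adt_network_def by blast

lemma adt_network_inp_not_outp:
  assumes net: "adt_network inp outp E" and "e \<in> inp V" "e \<in> outp W"
  shows False
proof -
  have "V = W"
    using adt_network_port_owner_unique[OF net, of e V W] assms by blast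
  with assms show False
    unfolding adt_network_def by blast
qed

lemma adt_network_edgeD:
  assumes "adt_network inp outp E" "(e, e') \<in> E"
  obtains V W where "V \<noteq> W" "e \<in> outp V" "e' \<in> inp W"
  using assms unfolding adt_network_def by blast

lemma wf_supernode_rel:
  fixes inp outp :: "'v \<Rightarrow> 'p::finite set"
  assumes net: "adt_network inp outp E"
  shows "wf (supernode_rel inp outp E)"
proof -
  define owner where "owner e = (SOME V. e \<in> inp V \<union> outp V)" for e
  have owner: "owner e = V" if "e \<in> inp V \<union> outp V" for e V
    using someI[of "\<lambda>V. e \<in> inp V \<union> outp V", OF that]
      adt_network_port_owner_unique[OF net _ that]
    unfolding owner_def by blast
  \<comment> \<open>only the finitely many supernodes owning a port occur in the relation\<close>
  have "supernode_rel inp outp E \<subseteq> range owner \<times> range owner"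
    unfolding supernode_rel_def using owner by blast
  then have "finite (supernode_rel inp outp E)"
    by (rule finite_subset) simp
  then show ?thesis
    using finite_acyclic_wf net unfolding adt_network_def by blast
qed

lemma adj_matrix_inp_column:
  assumes net: "adt_network inp outp E" and j: "j \<in> inp V"
  shows "adj_matrix inp outp E beta $ i $ j = (if (i, j) \<in> E then 1 else 0)"
  using adt_network_inp_not_outp[OF net j] unfolding adj_matrix_def by auto

lemma adj_matrix_outp_column:
  assumes net: "adt_network inp outp E" and j: "j \<in> outp V"
  shows "adj_matrix inp outp E beta $ i $ j = (if i \<in> inp V then beta i j else 0)"
proof -
  have "(i, j) \<notin> E"
    using adt_network_inp_not_outp[OF net _ j] adt_network_edgeD[OF net] by metis
  moreover have "(\<exists>W. i \<in> inp W \<and> j \<in> outp W) \<longleftrightarrow> i \<in> inp V"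
    using adt_network_port_owner_unique[OF net, of j V] j by blast
  ultimately show ?thesis
    unfolding adj_matrix_def by simp
qed

lemma vector_adj_matrix_inp:
  fixes x :: "'a::field ^ 'p::finite"
  assumes net: "adt_network inp outp E" and j: "j \<in> inp V"
  shows "(x v* adj_matrix inp outp E beta) $ j = (\<Sum>i\<in>{i. (i, j) \<in> E}. x $ i)"
  by (simp add: vector_matrix_mult_def adj_matrix_inp_column[OF net j] if_distrib[of "times _"]
      sum.If_cases Int_def)

lemma vector_adj_matrix_outp:
  fixes x :: "'a::field ^ 'p::finite"
  assumes net: "adt_network inp outp E" and j: "j \<in> outp V"
  shows "(x v* adj_matrix inp outp E beta) $ j = (\<Sum>i\<in>inp V. beta i j * x $ i)"
  by (simp add: vector_matrix_mult_def adj_matrix_outp_column[OF net j] if_distrib[of "times _"]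
      sum.If_cases mult.commute)

lemma adj_matrix_fixed_row_vector_eq_0:
  fixes x :: "'a::field ^ 'p::finite"
  assumes net: "adt_network inp outp E"
    and fixed: "x v* adj_matrix inp outp E beta = x"
  shows "x = 0"
proof -
  have "\<forall>e \<in> inp V \<union> outp V. x $ e = 0" for V
    using wf_supernode_rel[OF net]
  proof (induction V rule: wf_induct_rule)
    case (less V)
    have inp_zero: "x $ j = 0" if j: "j \<in> inp V" for j
    proof -
      have "x $ i = 0" if "(i, j) \<in> E" for i
      proof -
        obtain W V' where "i \<in> outp W" "j \<in> inp V'"
          using adt_network_edgeD[OF net \<open>(i, j) \<in> E\<close>] by metis
        moreover have "V' = V"
          using adt_network_port_owner_unique[OF net, of j] \<open>j \<in> inp V'\<close> j by blast
        ultimately have "(W, V) \<in> supernode_rel inp outp E"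
          using \<open>(i, j) \<in> E\<close> unfolding supernode_rel_def by blast
        then show ?thesis
          using less.IH \<open>i \<in> outp W\<close> by blast
      qed
      then have "(x v* adj_matrix inp outp E beta) $ j = 0"
        by (simp add: vector_adj_matrix_inp[OF net j])
      then show ?thesis
        by (simp add: fixed)
    qed
    have "x $ j = 0" if j: "j \<in> outp V" for j
    proof -
      have "(x v* adj_matrix inp outp E beta) $ j = 0"
        by (simp add: vector_adj_matrix_outp[OF net j] inp_zero)
      then show ?thesis
        by (simp add: fixed)
    qed
    with inp_zero show ?case
      by blast
  qed
  then show ?thesis
    using adt_network_port_owner[OF net] by (metis vec_eq_iff zero_index)
qed

lemma invertible_if_left_kernel_trivial:
  fixes M :: "'a::field ^ 'n ^ 'n"
  assumes "\<And>x. x v* M = 0 \<Longrightarrow> x = 0"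
  shows "invertible M"
proof -
  have "\<exists>B. B ** transpose M = mat 1"
    using assms by (simp add: matrix_left_invertible_ker)
  then show ?thesis
    by (simp add: left_invertible_transpose invertible_right_inverse)
qed

lemma invertible_I_minus_adj_matrix:
  fixes inp outp :: "'v \<Rightarrow> 'p::finite set"
    and beta :: "'p \<Rightarrow> 'p \<Rightarrow> 'a::field"
  assumes net: "adt_network inp outp E"
  shows "invertible (mat 1 - adj_matrix inp outp E beta)"
proof (rule invertible_if_left_kernel_trivial)
  fix x :: "'a ^ 'p"
  assume "x v* (mat 1 - adj_matrix inp outp E beta) = 0"
  then have "x v* adj_matrix inp outp E beta = x"
    by (simp add: vector_matrix_mult_diff_rdistrib)
  then show "x = 0"
    by (rule adj_matrix_fixed_row_vector_eq_0[OF net])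
qed

lemma matrix_inv_right:
  fixes M :: "'a::field ^ 'n ^ 'n"
  assumes "invertible M"
  shows "M ** matrix_inv M = mat 1"
  using assms unfolding invertible_def matrix_inv_def by (rule someI2_ex) blast

lemma vector_matrix_solve:
  fixes M :: "'a::field ^ 'n ^ 'n"
  assumes "invertible M" "y v* M = b"
  shows "y = b v* matrix_inv M"
  by (metis assms vector_matrix_mul_assoc matrix_inv_right vector_matrix_mul_rid)

lemma vector_enc_matrix:
  "(X v* enc_matrix outp S alpha) $ j
     = (if j \<in> outp S then (\<Sum>i\<in>UNIV. alpha i j * X $ i) else 0)"
  by (simp add: vector_matrix_mult_def enc_matrix_def mult.commute)

lemma coding_rules_port_equation:
  fixes inp outp :: "'v \<Rightarrow> 'p::finite set"
  assumes net: "adt_network inp outp E"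
    and rules: "coding_rules inp outp E S beta alpha X Y"
  shows "(\<chi> e. Y e) v* (mat 1 - adj_matrix inp outp E beta) = X v* enc_matrix outp S alpha"
proof (subst vec_eq_iff, rule allI)
  fix j
  obtain V where V: "j \<in> inp V \<union> outp V"
    using adt_network_port_owner[OF net] .
  have "Y j - ((\<chi> e. Y e) v* adj_matrix inp outp E beta) $ j = (X v* enc_matrix outp S alpha) $ j"
  proof (cases "j \<in> inp V")
    case True
    moreover have "j \<notin> outp S"
      using adt_network_inp_not_outp[OF net True] by blast
    ultimately show ?thesis
      using rules by (simp add: coding_rules_def vector_adj_matrix_inp[OF net] vector_enc_matrix)
  next
    case False
    with V have j: "j \<in> outp V"
      by blast
    moreover have "j \<in> outp S \<longleftrightarrow> V = S"
      using adt_network_port_owner_unique[OF net, of j] j by blast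
    ultimately show ?thesis
      using rules by (simp add: coding_rules_def vector_adj_matrix_outp[OF net j] vector_enc_matrix)
  qed
  then show "((\<chi> e. Y e) v* (mat 1 - adj_matrix inp outp E beta)) $ j
      = (X v* enc_matrix outp S alpha) $ j"
    by (simp add: vector_matrix_mult_diff_rdistrib)
qed

lemma dest_outputs_eq_vector_matrix:
  fixes inp :: "'v \<Rightarrow> 'p::finite set"
  shows "dest_outputs inp dest eps Y = (\<chi> e. Y e) v* transpose (dec_matrix inp dest eps)"
  by (simp add: vec_eq_iff dest_outputs_def dec_matrix_def matrix_vector_mult_def
      if_distrib[of "times _"] sum.If_cases mult.commute)

text \<open>The hypotheses \<open>mu\<close> and \<open>dests\<close> only describe the setting; the identity holds without them.\<close>

theorem theorem1:
  fixes inp outp :: "'v \<Rightarrow> 'p::finite set"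
    and E :: "('p \<times> 'p) set"
    and S :: 'v and Ts :: "'v set"
    and dest :: "'z::finite \<Rightarrow> 'v"
    and beta :: "'p \<Rightarrow> 'p \<Rightarrow> 'a::{field,finite}"
    and alpha :: "'i::finite \<Rightarrow> 'p \<Rightarrow> 'a"
    and eps :: "'p \<Rightarrow> 'z \<Rightarrow> 'a"
  assumes net: "adt_network inp outp E"
    and mu: "CARD('i) \<le> card (outp S)"
    and dests: "\<forall>z. dest z \<in> Ts"
  shows "invertible (mat 1 - adj_matrix inp outp E beta)
    \<and> (\<forall>X Y. coding_rules inp outp E S beta alpha X Y \<longrightarrow>
          dest_outputs inp dest eps Y
          = X v* (enc_matrix outp S alpha ** matrix_inv (mat 1 - adj_matrix inp outp E beta)
                  ** transpose (dec_matrix inp dest eps)))"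
proof (intro conjI allI impI)
  let ?M = "mat 1 - adj_matrix inp outp E beta"
  show inv: "invertible ?M"
    by (rule invertible_I_minus_adj_matrix[OF net])
  fix X Y
  assume "coding_rules inp outp E S beta alpha X Y"
  then have "(\<chi> e. Y e) = (X v* enc_matrix outp S alpha) v* matrix_inv ?M"
    by (rule vector_matrix_solve[OF inv coding_rules_port_equation[OF net]])
  then show "dest_outputs inp dest eps Y
      = X v* (enc_matrix outp S alpha ** matrix_inv ?M ** transpose (dec_matrix inp dest eps))"
    by (simp only: dest_outputs_eq_vector_matrix vector_matrix_mul_assoc)
qed

end
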